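(* Consider the normalised two-player, two-market Cournot game with per-period utility $u(x,a)=-2x(x+a)$ for a player playing $x$ against an opponent playing $a$. Let $c=-\frac{1}{1+\sqrt2}$ and let player 2's initial strategy be $a_0\in[-1,1]$. The players update alternately, each responding to the opponent's current strategy $a$ by switching to $c\,a$: at time $t=0$ player 1 updates (to $c\,a_0$), at $t=1$ player 2 updates (to $c^2a_0$), at $t=2$ player 1 updates, and so on. Let $u_t$ denote player 1's one-period utility at time $t$, evaluated at both players' strategies after the update at time $t$, and let $g=u_0=u(c\,a_0,a_0)$ be player 1's utility after the first move, measured relative to the equilibrium utility $0$. Then $$\sum_{t=0}^{\infty}u_t=\frac{(1+\sqrt2)\,g}{4},$$ which is strictly positive whenever $a_0\neq 0$.
   Context: Two players each have one unit of a homogeneous good (zero production and transportation cost) to split between two markets with inverse-linear demand. Strategies are normalised to numbers in $[-1,1]$ with $0$ the unique Cournot equilibrium split, and the normalised one-period utility (relative to the equilibrium utility, normalised to $0$) of a player playing $x$ against an opponent playing $a$ is $u(x,a)=-2x(x+a)$. The response rule $a\mapsto -\frac{a}{1+\sqrt2}$ is the one the paper calls the infinite time horizon optimal strategy. *)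

theory Defs
  imports Complex_Main
begin

definition util :: "real \<Rightarrow> real \<Rightarrow> real" where
  "util x a = -2 * x * (x + a)"

text \<open>The infinite-horizon optimal response coefficient.\<close>
definition copt :: real where
  "copt = - 1 / (1 + sqrt 2)"

text \<open>Strategy profile (player 1, player 2) after the update at time t,
  starting from player 2's initial strategy a0.\<close>
fun profile :: "real \<Rightarrow> nat \<Rightarrow> real \<times> real" where
  "profile a0 0 = (copt * a0, a0)"
| "profile a0 (Suc t) =
     (let (x, y) = profile a0 t in
      if even (Suc t) then (copt * y, y) else (x, copt * x))"

definition util1 :: "real \<Rightarrow> nat \<Rightarrow> real" where
  "util1 a0 t = util (fst (profile a0 t)) (snd (profile a0 t))"

end

theory Submission
  imports Defs "HOL-Probability.Characteristic_Functions"
begin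

text \<open>Two updates rescale both strategies by \<open>copt\<^sup>2\<close>, and the utility is a quadratic form,
  so the utilities satisfy \<open>u (t + 2) = copt\<^sup>4 * u t\<close> with \<open>u 1 = copt * u 0\<close>.
  Their sum is therefore \<open>g (1 + copt) / (1 - copt\<^sup>4) = g / ((1 - copt) (1 + copt\<^sup>2))\<close>,
  which for \<open>copt = 1 - sqrt 2\<close> equals \<open>(1 + sqrt 2) g / 4\<close>.\<close>

lemma two_step_geometric_power:
  fixes f :: "nat \<Rightarrow> 'a::monoid_mult"
  assumes "\<And>n. f (Suc (Suc n)) = q * f n"
  shows "f (2 * k + i) = q ^ k * f i"
proof (induction k)
  case (Suc k)
  have "f (2 * Suc k + i) = q * f (2 * k + i)"
    using assms[of "2 * k + i"] by simp
  with Suc show ?case by (simp add: mult.assoc)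
qed simp

lemma two_step_geometric_sums:
  fixes f :: "nat \<Rightarrow> 'a::real_normed_field"
  assumes rec: "\<And>n. f (Suc (Suc n)) = q * f n" and "norm q < 1"
  shows "f sums ((f 0 + f 1) / (1 - q))"
proof -
  have pow: "f (2 * k + i) = q ^ k * f i" for k i
    using rec by (rule two_step_geometric_power)
  have even_partial: "(\<Sum>n<2 * N. f n) = (f 0 + f 1) * (\<Sum>k<N. q ^ k)" for N
  proof -
    have "(\<Sum>n<2 * N. f n) = (\<Sum>k<N. \<Sum>n\<in>{k * 2..<k * 2 + 2}. f n)"
      by (simp only: sum.nat_group mult.commute)
    also have "\<dots> = (\<Sum>k<N. (f 0 + f 1) * q ^ k)"
      using pow[of _ 0] pow[of _ 1] by (simp add: numeral_2_eq_2 algebra_simps)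
    finally show ?thesis by (simp add: sum_distrib_left)
  qed
  have "(\<lambda>N. \<Sum>k<N. q ^ k) \<longlonglongrightarrow> 1 / (1 - q)"
    using geometric_sums[OF \<open>norm q < 1\<close>] by (simp add: sums_def)
  then have evens: "(\<lambda>N. \<Sum>n<2 * N. f n) \<longlonglongrightarrow> (f 0 + f 1) / (1 - q)"
    unfolding even_partial by (auto intro: tendsto_eq_intros)
  have "(\<lambda>N. q ^ N * f 0) \<longlonglongrightarrow> 0"
    using LIMSEQ_power_zero[OF \<open>norm q < 1\<close>] by (auto intro: tendsto_eq_intros)
  with evens have "(\<lambda>N. (\<Sum>n<2 * N. f n) + q ^ N * f 0) \<longlonglongrightarrow> (f 0 + f 1) / (1 - q)"
    using tendsto_add by fastforce
  moreover have "(\<Sum>n<2 * N + 1. f n) = (\<Sum>n<2 * N. f n) + q ^ N * f 0" for N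
    using pow[of N 0] by simp
  ultimately have "(\<lambda>N. \<Sum>n<2 * N + 1. f n) \<longlonglongrightarrow> (f 0 + f 1) / (1 - q)"
    by simp
  with evens show ?thesis
    unfolding sums_def by (rule limseq_even_odd)
qed

lemma util_scale: "util (r * x) (r * y) = r\<^sup>2 * util x y"
  by (simp add: util_def power2_eq_square algebra_simps)

lemma copt_eq: "copt = 1 - sqrt 2"
proof -
  have "(1 + sqrt 2) * (1 - sqrt 2) = -1"
    by (simp add: algebra_simps)
  moreover have "1 + sqrt 2 > 0"
    by (simp add: add_pos_nonneg)
  ultimately show ?thesis
    unfolding copt_def by (simp add: field_simps)
qed

lemma copt_bounds: "-1 < copt" "copt < 0"
proof -
  have "sqrt 2 < 2"
    by (rule real_less_lsqrt) simp_all
  then show "-1 < copt" by (simp add: copt_eq)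
  show "copt < 0" by (simp add: copt_eq)
qed

lemma norm_copt_power4_less_one: "norm (copt ^ 4) < 1"
proof -
  have "\<bar>copt\<bar> < 1"
    using copt_bounds by simp
  then show ?thesis
    unfolding real_norm_def power_abs by (simp only: power_less_one_iff abs_ge_zero) simp
qed

lemma util_first_response_pos:
  assumes "a0 \<noteq> 0"
  shows "util (copt * a0) a0 > 0"
proof -
  have "util (copt * a0) a0 = 2 * (- copt) * (1 + copt) * a0\<^sup>2"
    by (simp add: util_def power2_eq_square algebra_simps)
  also have "\<dots> > 0"
    using copt_bounds assms by (intro mult_pos_pos) simp_all
  finally show ?thesis .
qed

lemma profile_responds:
  "if even t then fst (profile a0 t) = copt * snd (profile a0 t)
   else snd (profile a0 t) = copt * fst (profile a0 t)"
  by (cases t) (simp_all add: case_prod_beta)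

lemma profile_Suc_Suc:
  "profile a0 (Suc (Suc t)) = (copt\<^sup>2 * fst (profile a0 t), copt\<^sup>2 * snd (profile a0 t))"
proof -
  obtain x y where xy: "profile a0 t = (x, y)"
    by fastforce
  then have "if even t then x = copt * y else y = copt * x"
    using profile_responds[of t a0] by (simp only: fst_conv snd_conv)
  with xy show ?thesis
    by (cases "even t") (simp_all add: power2_eq_square)
qed

lemma util1_Suc_Suc: "util1 a0 (Suc (Suc t)) = copt ^ 4 * util1 a0 t"
proof -
  have "util1 a0 (Suc (Suc t)) = (copt\<^sup>2)\<^sup>2 * util1 a0 t"
    unfolding util1_def profile_Suc_Suc fst_conv snd_conv by (rule util_scale)
  then show ?thesis by simp
qed

lemma util1_one: "util1 a0 1 = copt * util1 a0 0"
  by (simp add: util1_def util_def algebra_simps)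

lemma copt_sum_factor: "(1 + copt) / (1 - copt ^ 4) = (1 + sqrt 2) / 4"
proof -
  have factor: "1 - copt ^ 4 = (1 + copt) * ((1 - copt) * (1 + copt\<^sup>2))"
    by (simp add: algebra_simps power2_eq_square power4_eq_xxxx)
  have "(1 - copt) * (1 + copt\<^sup>2) = 4 * (sqrt 2 - 1)"
    by (simp add: copt_eq algebra_simps power2_eq_square)
  with factor have "1 - copt ^ 4 = (1 + copt) * (4 * (sqrt 2 - 1))"
    by simp
  moreover have "1 + copt \<noteq> 0"
    using copt_bounds by simp
  ultimately have "(1 + copt) / (1 - copt ^ 4) = 1 / (4 * (sqrt 2 - 1))"
    by simp
  also have "\<dots> = (1 + sqrt 2) / 4"
    by (simp add: field_simps algebra_simps)
  finally show ?thesis .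
qed

theorem theorem5:
  fixes a0 :: real
  assumes "a0 \<in> {-1..1}"
  defines "g \<equiv> util (copt * a0) a0"
  shows "(util1 a0) sums ((1 + sqrt 2) * g / 4) \<and> (a0 \<noteq> 0 \<longrightarrow> (1 + sqrt 2) * g / 4 > 0)"
proof
  have "util1 a0 sums ((util1 a0 0 + util1 a0 1) / (1 - copt ^ 4))"
    using util1_Suc_Suc norm_copt_power4_less_one by (rule two_step_geometric_sums)
  also have "(util1 a0 0 + util1 a0 1) / (1 - copt ^ 4) = g * ((1 + copt) / (1 - copt ^ 4))"
    unfolding util1_one by (simp add: util1_def g_def algebra_simps)
  also have "\<dots> = (1 + sqrt 2) * g / 4"
    by (simp add: copt_sum_factor)
  finally show "util1 a0 sums ((1 + sqrt 2) * g / 4)" .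
  show "a0 \<noteq> 0 \<longrightarrow> (1 + sqrt 2) * g / 4 > 0"
    using util_first_response_pos by (simp add: g_def add_pos_nonneg)
qed

end
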